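(* Let $n\ge 3$ and let $K$ be a proper $4$-coloring of $H_2(n,n-1)$. Then $|T_x(K)|\le 2$ for all $x\in\mathbb{Z}_2^n$. Consequently $\mathrm{rb}(K)\le \frac{2}{n+1}$, with equality if and only if $|T_x(K)|=2$ for all $x\in\mathbb{Z}_2^n$.
   Context: $H_2(n,n-1)$ is the simple undirected graph with vertex set $\mathbb{Z}_2^n$ in which $x,y$ are adjacent iff their Hamming distance $|\{i:x_i\ne y_i\}|$ is at least $n-1$. For a simple graph $G=(V,E)$ and a proper $k$-coloring $K:V\to[k]$ (adjacent vertices receive different colors), an edge $(x,y)\in E$ is a transition edge for $K$ if the map obtained from $K$ by swapping the colors of $x$ and $y$ (i.e. assigning $K(y)$ to $x$, $K(x)$ to $y$, and keeping all other colors) is again a proper $k$-coloring. $T(K)$ is the set of transition edges, $T_x(K)=\{y: (x,y)\in T(K)\}$, and the robustness of $K$ is $\mathrm{rb}(K)=|T(K)|/|E|$ (edges counted as unordered pairs). *)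

theory Defs
  imports Main "HOL-Library.Disjoint_Sets" Complex_Main
begin

text \<open>Vertices of Z_2^n are represented as boolean lists of length n.\<close>

definition cube :: "nat \<Rightarrow> bool list set" where
  "cube n = {xs. length xs = n}"

definition hamming :: "bool list \<Rightarrow> bool list \<Rightarrow> nat" where
  "hamming x y = card {i. i < length x \<and> x ! i \<noteq> y ! i}"

definition H_adj :: "nat \<Rightarrow> bool list \<Rightarrow> bool list \<Rightarrow> bool" where
  "H_adj n x y \<longleftrightarrow> x \<in> cube n \<and> y \<in> cube n \<and> x \<noteq> y \<and> hamming x y \<ge> n - 1"

definition graph_edges :: "'a set \<Rightarrow> ('a \<Rightarrow> 'a \<Rightarrow> bool) \<Rightarrow> 'a set set" where
  "graph_edges V adj = {{x, y} | x y. x \<in> V \<and> y \<in> V \<and> adj x y}"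

definition proper_coloring :: "'a set \<Rightarrow> ('a \<Rightarrow> 'a \<Rightarrow> bool) \<Rightarrow> nat \<Rightarrow> ('a \<Rightarrow> nat) \<Rightarrow> bool" where
  "proper_coloring V adj k K \<longleftrightarrow>
     (\<forall>x\<in>V. K x \<in> {1..k}) \<and> (\<forall>x\<in>V. \<forall>y\<in>V. adj x y \<longrightarrow> K x \<noteq> K y)"

definition swap_colors :: "('a \<Rightarrow> nat) \<Rightarrow> 'a \<Rightarrow> 'a \<Rightarrow> ('a \<Rightarrow> nat)" where
  "swap_colors K x y = K(x := K y, y := K x)"

definition transition_edge :: "'a set \<Rightarrow> ('a \<Rightarrow> 'a \<Rightarrow> bool) \<Rightarrow> nat \<Rightarrow> ('a \<Rightarrow> nat) \<Rightarrow> 'a \<Rightarrow> 'a \<Rightarrow> bool" where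
  "transition_edge V adj k K x y \<longleftrightarrow>
     x \<in> V \<and> y \<in> V \<and> adj x y \<and> proper_coloring V adj k (swap_colors K x y)"

definition transition_set :: "'a set \<Rightarrow> ('a \<Rightarrow> 'a \<Rightarrow> bool) \<Rightarrow> nat \<Rightarrow> ('a \<Rightarrow> nat) \<Rightarrow> 'a set set" where
  "transition_set V adj k K = {{x, y} | x y. transition_edge V adj k K x y}"

definition transition_nbrs :: "'a set \<Rightarrow> ('a \<Rightarrow> 'a \<Rightarrow> bool) \<Rightarrow> nat \<Rightarrow> ('a \<Rightarrow> nat) \<Rightarrow> 'a \<Rightarrow> 'a set" where
  "transition_nbrs V adj k K x = {y. transition_edge V adj k K x y}"

definition robustness :: "'a set \<Rightarrow> ('a \<Rightarrow> 'a \<Rightarrow> bool) \<Rightarrow> nat \<Rightarrow> ('a \<Rightarrow> nat) \<Rightarrow> real" where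
  "robustness V adj k K = real (card (transition_set V adj k K)) / real (card (graph_edges V adj))"

end

theory Submission
  imports Defs
begin

text \<open>
  A transition neighbour w of x carries a colour that no other neighbour of x carries, since
  after the swap x takes that colour. So with 4 colours the transition neighbours of x have
  pairwise distinct colours among the 3 colours different from K x; if there were 3 of them,
  every neighbour of x would share its colour with one of them and hence be one of them, which
  is impossible because x has n + 1 \<ge> 4 neighbours. Counting edges by degrees (the graph is
  (n+1)-regular, and transition edges form a subgraph) turns the bound 2 on each transition
  degree into the bound 2/(n+1) on the robustness, with equality exactly when every transition
  degree is 2.
\<close>

lemma divide_mult_cancel_iff:
  fixes S N d c :: real
  assumes "N > 0" and "d > 0"
  shows "S / (N * d) \<le> c / d \<longleftrightarrow> S \<le> c * N"
    and "S / (N * d) = c / d \<longleftrightarrow> S = c * N"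
  using assms by (simp_all add: field_simps)

lemma sum_eq_card_mult_iff:
  fixes f :: "'a \<Rightarrow> nat"
  assumes "finite A" and "\<And>x. x \<in> A \<Longrightarrow> f x \<le> c"
  shows "sum f A = card A * c \<longleftrightarrow> (\<forall>x\<in>A. f x = c)"
  using sum_mono_inv[of f A "\<lambda>_. c"] assms by auto

locale simple_graph =
  fixes V :: "'a set" and adj :: "'a \<Rightarrow> 'a \<Rightarrow> bool"
  assumes adj_sym: "adj x y \<Longrightarrow> adj y x"
    and adj_irrefl: "\<not> adj x x"
    and adj_vertices: "adj x y \<Longrightarrow> x \<in> V \<and> y \<in> V"
begin

lemma finite_neighbours: "finite V \<Longrightarrow> finite {y. adj x y}"
  using adj_vertices by (auto intro: finite_subset)

lemma card_edge: "e \<in> graph_edges V adj \<Longrightarrow> card e = 2"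
  using adj_irrefl unfolding graph_edges_def by (auto simp: card_insert_if)

lemma card_neighbours_eq_card_incident_edges:
  "card {y. adj x y} = card {e \<in> graph_edges V adj. x \<in> e}"
proof (rule bij_betw_same_card)
  show "bij_betw (\<lambda>y. {x, y}) {y. adj x y} {e \<in> graph_edges V adj. x \<in> e}"
  proof (rule bij_betwI')
    fix y z assume "y \<in> {y. adj x y}" "z \<in> {y. adj x y}"
    then show "({x, y} = {x, z}) = (y = z)"
      using adj_irrefl by (metis doubleton_eq_iff mem_Collect_eq)
  next
    fix y assume "y \<in> {y. adj x y}"
    then show "{x, y} \<in> {e \<in> graph_edges V adj. x \<in> e}"
      using adj_vertices unfolding graph_edges_def by blast
  next
    fix e assume "e \<in> {e \<in> graph_edges V adj. x \<in> e}"
    then obtain a b where "e = {a, b}" "adj a b" "x \<in> e"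
      unfolding graph_edges_def by blast
    then show "\<exists>y\<in>{y. adj x y}. e = {x, y}"
      using adj_sym by (auto simp: insert_commute)
  qed
qed

lemma sum_degrees_eq_twice_card_edges:
  assumes "finite V"
  shows "(\<Sum>x\<in>V. card {y. adj x y}) = 2 * card (graph_edges V adj)"
proof -
  let ?E = "graph_edges V adj"
  have E_Pow: "?E \<subseteq> Pow V"
    unfolding graph_edges_def by auto
  then have "finite ?E"
    using assms by (meson finite_Pow_iff finite_subset)
  have "(\<Sum>x\<in>V. card {y. adj x y}) = (\<Sum>x\<in>V. \<Sum>e\<in>?E. if x \<in> e then 1 else 0)"
    using \<open>finite ?E\<close>
    by (simp add: card_neighbours_eq_card_incident_edges sum.If_cases Int_def conj_commute)
  also have "\<dots> = (\<Sum>e\<in>?E. \<Sum>x\<in>V. if x \<in> e then 1 else 0)"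
    by (rule sum.swap)
  also have "\<dots> = (\<Sum>e\<in>?E. card e)"
    using assms E_Pow by (intro sum.cong) (auto simp: sum.If_cases Int_absorb1)
  also have "\<dots> = 2 * card ?E"
    by (simp add: card_edge)
  finally show ?thesis .
qed

lemma transition_edge_sym:
  assumes "transition_edge V adj k K x y"
  shows "transition_edge V adj k K y x"
proof -
  have "x \<noteq> y"
    using assms adj_irrefl unfolding transition_edge_def by blast
  then have "swap_colors K x y = swap_colors K y x"
    unfolding swap_colors_def by (simp add: fun_upd_twist)
  with assms adj_sym show ?thesis
    unfolding transition_edge_def by metis
qed

lemma simple_graph_transition_edges: "simple_graph V (transition_edge V adj k K)"
proof
  show "transition_edge V adj k K y x" if "transition_edge V adj k K x y" for x y
    using that by (rule transition_edge_sym)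
  show "\<not> transition_edge V adj k K x x" for x
    using adj_irrefl unfolding transition_edge_def by blast
  show "x \<in> V \<and> y \<in> V" if "transition_edge V adj k K x y" for x y
    using that unfolding transition_edge_def by blast
qed

lemma transition_set_eq_graph_edges:
  "transition_set V adj k K = graph_edges V (transition_edge V adj k K)"
  unfolding transition_set_def graph_edges_def transition_edge_def by blast

lemma robustness_eq_sum_transition_degrees:
  assumes "finite V" and "\<And>x. x \<in> V \<Longrightarrow> card {y. adj x y} = d"
  shows "robustness V adj k K
    = real (\<Sum>x\<in>V. card (transition_nbrs V adj k K x)) / (real (card V) * real d)"
proof -
  interpret transitions: simple_graph V "transition_edge V adj k K"
    by (rule simple_graph_transition_edges)
  have "2 * card (transition_set V adj k K) = (\<Sum>x\<in>V. card (transition_nbrs V adj k K x))"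
    using transitions.sum_degrees_eq_twice_card_edges[OF assms(1)]
    by (simp add: transition_set_eq_graph_edges transition_nbrs_def)
  moreover have "2 * card (graph_edges V adj) = card V * d"
    using sum_degrees_eq_twice_card_edges[OF assms(1)] assms(2) by simp
  moreover have "robustness V adj k K
      = real (2 * card (transition_set V adj k K)) / real (2 * card (graph_edges V adj))"
    unfolding robustness_def by simp
  ultimately show ?thesis
    by simp
qed

lemma robustness_le_regular:
  assumes "finite V" and "V \<noteq> {}" and "d > 0"
    and regular: "\<And>x. x \<in> V \<Longrightarrow> card {y. adj x y} = d"
    and le: "\<And>x. x \<in> V \<Longrightarrow> card (transition_nbrs V adj k K x) \<le> c"
  shows "robustness V adj k K \<le> real c / real d"
    and "robustness V adj k K = real c / real d \<longleftrightarrow> (\<forall>x\<in>V. card (transition_nbrs V adj k K x) = c)"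
proof -
  define S where "S = (\<Sum>x\<in>V. card (transition_nbrs V adj k K x))"
  have pos: "real (card V) > 0" "real d > 0"
    using assms(1-3) by (simp_all add: card_gt_0_iff)
  have rb: "robustness V adj k K = real S / (real (card V) * real d)"
    using robustness_eq_sum_transition_degrees[OF assms(1) regular] by (simp add: S_def)
  have "S \<le> c * card V"
    using sum_mono[of V _ "\<lambda>_. c", OF le] by (simp add: S_def mult.commute)
  then have "real S \<le> real c * real (card V)"
    by (metis of_nat_le_iff of_nat_mult)
  then show "robustness V adj k K \<le> real c / real d"
    unfolding rb divide_mult_cancel_iff[OF pos] .
  have "real S = real c * real (card V) \<longleftrightarrow> S = card V * c"
    by (metis mult.commute of_nat_eq_iff of_nat_mult)
  also have "\<dots> \<longleftrightarrow> (\<forall>x\<in>V. card (transition_nbrs V adj k K x) = c)"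
    unfolding S_def using sum_eq_card_mult_iff[OF assms(1) le] .
  finally show "robustness V adj k K = real c / real d \<longleftrightarrow> (\<forall>x\<in>V. card (transition_nbrs V adj k K x) = c)"
    unfolding rb divide_mult_cancel_iff[OF pos] .
qed

lemma transition_colour_unique:
  assumes "transition_edge V adj k K x w" and "adj x u" and "u \<noteq> w"
  shows "K u \<noteq> K w"
proof -
  have "proper_coloring V adj k (swap_colors K x w)" "x \<noteq> w" "x \<noteq> u"
    using assms adj_irrefl unfolding transition_edge_def by metis+
  then have "swap_colors K x w x \<noteq> swap_colors K x w u"
    using assms(2) adj_vertices unfolding proper_coloring_def by blast
  then show ?thesis
    using \<open>x \<noteq> w\<close> \<open>x \<noteq> u\<close> \<open>u \<noteq> w\<close> unfolding swap_colors_def by auto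
qed

lemma card_transition_nbrs_le:
  assumes K: "proper_coloring V adj k K" and "x \<in> V"
    and "finite {y. adj x y}" and "card {y. adj x y} \<ge> k"
  shows "card (transition_nbrs V adj k K x) \<le> k - 2"
proof -
  let ?T = "transition_nbrs V adj k K x" and ?N = "{y. adj x y}"
  let ?C = "{1..k} - {K x}"
  have T_N: "?T \<subseteq> ?N"
    unfolding transition_nbrs_def transition_edge_def by auto
  have colour_other: "K u \<in> ?C" if "u \<in> ?N" for u
    using K \<open>x \<in> V\<close> that adj_vertices[of x u] unfolding proper_coloring_def by fastforce
  have "inj_on K ?T"
  proof (rule inj_onI)
    fix v w assume "v \<in> ?T" "w \<in> ?T" "K v = K w"
    then show "v = w"
      using transition_colour_unique[of k K x w v] T_N unfolding transition_nbrs_def by blast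
  qed
  have T_C: "K ` ?T \<subseteq> ?C"
    using T_N by (intro image_subsetI colour_other) blast
  have "K x \<in> {1..k}"
    using K \<open>x \<in> V\<close> unfolding proper_coloring_def by blast
  then have card_C: "card ?C = k - 1" and "k \<ge> 1"
    by simp_all
  have card_T_eq: "card ?T = card (K ` ?T)"
    using \<open>inj_on K ?T\<close> by (simp add: card_image)
  have card_T: "card ?T \<le> k - 1"
    using card_mono[OF _ T_C] card_T_eq card_C by simp
  have "card ?T \<noteq> k - 1"
  proof
    assume "card ?T = k - 1"
    then have "K ` ?T = ?C"
      using T_C card_C card_T_eq by (simp add: card_subset_eq)
    have "?N \<subseteq> ?T"
    proof
      fix u assume "u \<in> ?N"
      then obtain w where "w \<in> ?T" "K u = K w"
        using colour_other \<open>K ` ?T = ?C\<close> by (metis imageE)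
      then show "u \<in> ?T"
        using transition_colour_unique \<open>u \<in> ?N\<close> unfolding transition_nbrs_def by blast
    qed
    then have "card ?N \<le> card ?T"
      using T_N assms(3) by (metis card_mono finite_subset)
    then show False
      using assms(4) \<open>card ?T = k - 1\<close> \<open>k \<ge> 1\<close> by linarith
  qed
  with card_T show ?thesis by linarith
qed

end

text \<open>Updating beyond the end of a list does nothing, so flip_all_but x (length x) is the antipode of x.\<close>

definition flip_all_but :: "bool list \<Rightarrow> nat \<Rightarrow> bool list" where
  "flip_all_but x i = (map Not x)[i := x ! i]"

lemma length_flip_all_but [simp]: "length (flip_all_but x i) = length x"
  unfolding flip_all_but_def by simp

lemma nth_flip_all_but:
  "j < length x \<Longrightarrow> flip_all_but x i ! j = (if j = i then x ! i else \<not> x ! j)"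
  unfolding flip_all_but_def by (auto simp: nth_list_update)

lemma inj_on_flip_all_but: "inj_on (flip_all_but x) {..length x}"
proof (rule inj_onI, rule ccontr)
  fix i j assume ij: "i \<in> {..length x}" "j \<in> {..length x}" "flip_all_but x i = flip_all_but x j"
    and "i \<noteq> j"
  define m where "m = min i j"
  have "m < length x" "m = i \<or> m = j"
    using ij \<open>i \<noteq> j\<close> unfolding m_def by auto
  then have "flip_all_but x i ! m \<noteq> flip_all_but x j ! m"
    using \<open>i \<noteq> j\<close> by (auto simp: nth_flip_all_but)
  then show False
    using ij by simp
qed

lemma hamming_eq_diff_card_agree:
  "hamming x y = length x - card {j. j < length x \<and> x ! j = y ! j}"
proof -
  have "{j. j < length x \<and> x ! j \<noteq> y ! j} = {..<length x} - {j. j < length x \<and> x ! j = y ! j}"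
    by auto
  then show ?thesis
    unfolding hamming_def by (simp add: card_Diff_subset subset_eq)
qed

lemma H_adj_flip_all_but:
  assumes "n \<ge> 2" and "x \<in> cube n" and "i \<le> n"
  shows "H_adj n x (flip_all_but x i)"
proof -
  have len: "length x = n"
    using assms(2) unfolding cube_def by simp
  have "{j. j < n \<and> x ! j = flip_all_but x i ! j} \<subseteq> {i}"
    using len by (auto simp: nth_flip_all_but split: if_splits)
  then have "card {j. j < n \<and> x ! j = flip_all_but x i ! j} \<le> 1"
    using card_mono[of "{i}"] by fastforce
  then have "n - 1 \<le> hamming x (flip_all_but x i)"
    unfolding hamming_eq_diff_card_agree len by (rule diff_le_mono2)
  moreover have "x \<noteq> flip_all_but x i"
  proof -
    define j :: nat where "j = (if i = 0 then 1 else 0)"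
    have "j < n" "j \<noteq> i"
      using assms(1) unfolding j_def by auto
    then have "flip_all_but x i ! j \<noteq> x ! j"
      using len by (simp add: nth_flip_all_but)
    then show ?thesis by metis
  qed
  ultimately show ?thesis
    using assms(2) len unfolding H_adj_def cube_def by simp
qed

lemma H_adj_imp_flip_all_but:
  assumes "H_adj n x y"
  shows "\<exists>i\<le>n. y = flip_all_but x i"
proof -
  have len: "length x = n" "length y = n" and "n - 1 \<le> hamming x y"
    using assms unfolding H_adj_def cube_def by auto
  let ?A = "{j. j < n \<and> x ! j = y ! j}"
  have "card ?A \<le> n"
    using card_mono[of "{..<n}" ?A] by auto
  with \<open>n - 1 \<le> hamming x y\<close> have "card ?A \<le> 1"
    unfolding hamming_eq_diff_card_agree len by linarith
  obtain i where "i \<le> n" and agree: "\<And>j. j < n \<Longrightarrow> x ! j = y ! j \<longleftrightarrow> j = i"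
  proof (cases "?A = {}")
    case True
    then show ?thesis
      using that[of n] by auto
  next
    case False
    then obtain i where "i \<in> ?A" by blast
    then have "?A = {i}"
      using \<open>card ?A \<le> 1\<close> card_le_Suc0_iff_eq[of ?A] by auto
    then have "x ! j = y ! j \<longleftrightarrow> j = i" if "j < n" for j
      using that by (simp add: set_eq_iff) metis
    then show ?thesis
      using that[of i] \<open>i \<in> ?A\<close> by simp
  qed
  have "y = flip_all_but x i"
  proof (rule nth_equalityI)
    fix j assume "j < length y"
    then show "y ! j = flip_all_but x i ! j"
      using agree[of j] len by (cases "j = i") (auto simp: nth_flip_all_but)
  qed (simp add: len)
  with \<open>i \<le> n\<close> show ?thesis by blast
qed

lemma H_adj_neighbours:
  assumes "n \<ge> 2" and "x \<in> cube n"
  shows "{y. H_adj n x y} = flip_all_but x ` {..n}"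
  using H_adj_flip_all_but[OF assms] H_adj_imp_flip_all_but[of n x] by blast

lemma card_H_adj_neighbours:
  "n \<ge> 2 \<Longrightarrow> x \<in> cube n \<Longrightarrow> card {y. H_adj n x y} = n + 1"
  using H_adj_neighbours card_image[OF inj_on_flip_all_but, of x]
  by (simp add: cube_def)

lemma simple_graph_H: "simple_graph (cube n) (H_adj n)"
proof
  show "H_adj n y x" if "H_adj n x y" for x y
    using that unfolding H_adj_def hamming_def cube_def by (auto simp: eq_commute)
  show "\<not> H_adj n x x" for x
    by (simp add: H_adj_def)
  show "x \<in> cube n \<and> y \<in> cube n" if "H_adj n x y" for x y
    using that by (simp add: H_adj_def)
qed

lemma finite_cube: "finite (cube n)"
  unfolding cube_def using finite_lists_length_eq[OF finite_UNIV] by simp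

lemma cube_nonempty: "cube n \<noteq> {}"
  unfolding cube_def using length_replicate[of n True] by blast

theorem proposition4p9:
  fixes n :: nat and K :: "bool list \<Rightarrow> nat"
  assumes "n \<ge> 3"
    and "proper_coloring (cube n) (H_adj n) 4 K"
  shows "(\<forall>x\<in>cube n. card (transition_nbrs (cube n) (H_adj n) 4 K x) \<le> 2)
    \<and> robustness (cube n) (H_adj n) 4 K \<le> 2 / (real n + 1)
    \<and> (robustness (cube n) (H_adj n) 4 K = 2 / (real n + 1) \<longleftrightarrow>
         (\<forall>x\<in>cube n. card (transition_nbrs (cube n) (H_adj n) 4 K x) = 2))"
proof -
  interpret H: simple_graph "cube n" "H_adj n" by (rule simple_graph_H)
  have degree: "card {y. H_adj n x y} = n + 1" if "x \<in> cube n" for x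
    using card_H_adj_neighbours assms(1) that by simp
  have t_le: "card (transition_nbrs (cube n) (H_adj n) 4 K x) \<le> 2" if "x \<in> cube n" for x
    using H.card_transition_nbrs_le[OF assms(2) that H.finite_neighbours[OF finite_cube]]
      degree[OF that] assms(1) by simp
  show ?thesis
    using t_le H.robustness_le_regular[OF finite_cube cube_nonempty _ degree t_le]
    by (simp add: add.commute)
qed

end
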